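(* Let $e_0,\dots,e_\eta$ be a fuzzy derivation of $e_\eta$ from $e_0$ using the fuzzy rule base $B$, and assume every value $e_\kappa(X)(u)$ ($\kappa\le\eta$, $X\in\mathbb X$, $u\in\mathbb U$) lies in $C$. Then $$T_D\cup S_U\cup S_{\mathbb A}\cup T_B\cup S_{e_0}(\tau/\tilde z)\models_{\mathcal K} S_{e_\eta}(\tau/\tilde s^{\eta}(\tilde z)).$$
   Context: Fuzzy rules. Let $\mathbb U$ be a nonempty countable set; a fuzzy set over $\mathbb U$ is a map $\mathbb U\to[0,1]$. $\mathrm{height}(A)=\sup_{u\in\mathbb U}A(u)$; $\mathrm{cut}(c,A)(u)=\min(c,A(u))$; $(A_1\cap A_2)(u)=\min(A_1(u),A_2(u))$; the union of a finite family of fuzzy sets is the pointwise maximum (the empty union is the constant $0$). Let $\mathbb A$ be a nonempty finite set of fuzzy sets over $\mathbb U$ and $\mathbb X$ a nonempty finite set of variables. A fuzzy rule $r$ is an expression "IF $X_0$ is $A_0$ and $\dots$ and $X_n$ is $A_n$ THEN $X$ is $A$" with $X_i,X\in\mathbb X$, $A_i,A\in\mathbb A$; $\mathrm{out}(r)=X$. A fuzzy rule base $B$ is a nonempty finite set of fuzzy rules. A fuzzy variable assignment is a map $e$ from $\mathbb X$ to fuzzy sets over $\mathbb U$. $\|X\|^r_e=\mathrm{cut}(\min_{i\le n}\mathrm{height}(e(X_i)\cap A_i),A)$ and $\|X\|^B_e=\bigcup\{\|X\|^r_e: r\in B,\mathrm{out}(r)=X\}$. A fuzzy derivation of $e_\eta$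 from $e_0$ using $B$ is a sequence $e_0,\dots,e_\eta$ of fuzzy variable assignments with $e_\kappa(X)=\|X\|^B_{e_{\kappa-1}}$ for all $1\le\kappa\le\eta$, $X\in\mathbb X$. Gödel logic: formulae with truth constants $\bar c$ ($c\in C$, $C\subseteq[0,1]$ countable), connectives $\wedge(=\min),\vee(=\max)$, $\to$ ($\|\varphi\to\psi\|=1$ if $\|\varphi\|\le\|\psi\|$ else $\|\psi\|$), $\leftrightarrow$ ($\min$ of both implications), $\eqcirc$ (value $1$ if the two values are equal, else $0$), quantifiers $\forall=\inf$, $\exists=\sup$; predicates are $[0,1]$-valued; $\mathcal I\models\varphi$ iff $\varphi$ has value $1$ under every variable assignment. An order clause is a finite set of literals $\varepsilon_1\eqcirc\varepsilon_2$ or $\varepsilon_1\prec\varepsilon_2$ (the latter has value $1$ iff the value of $\varepsilon_1$ is $<$ that of $\varepsilon_2$), true under an assignment if some literal has value 1; a model of a set of clauses/formulae satisfies each under all assignments. Truth-constant convention: $C\supseteq\{0,1\}\cup\bigcup_{A\in\mathbb A}A[\mathbb U]\cup\bigcup_{X}e_0(X)[\mathbb U]$. Encoding. Let $\mathcal L^*$ be a countable first-order language containing (pairwise distinct) a constant $\tilde z$, a unary function symbol $\tilde s$, binary function symbols $\mathit{frac}$, $\mathit{{-}frac}$, unary predicates $\mathit{nat},\mathit{rat},\mathit{time},\mathit{uni}$, a unary predicate $\tilde G_A$ for each $A\in\mathbb A$, binary predicates $\tilde H_X$ ($X\in\mathbb X$) and $\tilde H^r_X$ ($r\in B$, $\mathrm{out}(r)=X$).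 A natural numeral is $\tilde s^n(\tilde z)$. A rational numeral is $\mathit{frac}(\tilde s^m(\tilde z),\tilde s^n(\tilde z))$ with $n>0$ (value $m/n$) or $\mathit{{-}frac}(\tilde s^m(\tilde z),\tilde s^n(\tilde z))$ with $m,n>0$ (value $-m/n$). Fix an injection $\gamma:\mathbb U\to\mathbb Q$ and a set $\tilde{\mathbb U}$ of rational numerals with $\{\|\tilde u\|:\tilde u\in\tilde{\mathbb U}\}=\gamma[\mathbb U]$; $\langle\tilde u\rangle=\gamma^{-1}(\|\tilde u\|)\in\mathbb U$. $\mathcal K$ is the class of interpretations $\mathcal I$ for $\mathcal L^*$ whose universe is the set of ground terms of $\mathcal L^*$ and in which every function symbol is interpreted by term formation ($f^{\mathcal I}(t_1,\dots,t_m)=f(t_1,\dots,t_m)$); predicates are arbitrary. $\Gamma\models_{\mathcal K}\Phi$ means every $\mathcal I\in\mathcal K$ with $\mathcal I\models\Gamma$ satisfies $\mathcal I\models\Phi$. $T_D=\{\mathit{nat}(\tilde z),\ \mathit{nat}(\tilde s(x))\leftrightarrow\mathit{nat}(x),\ \mathit{rat}(\mathit{frac}(x,\tilde s(y)))\leftrightarrow\mathit{nat}(x)\wedge\mathit{nat}(y),\ \mathit{rat}(\mathit{{-}frac}(\tilde s(x),\tilde s(y)))\leftrightarrow\mathit{nat}(x)\wedge\mathit{nat}(y)\}\cup\{\mathit{nat}(f(x_1,\dots,x_m))\eqcirc\bar0: f\notin\{\tilde z,\tilde s\}\}\cup\{\mathit{rat}(f(x_1,\dots,x_m))\eqcirc\bar0: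 f\notin\{\mathit{frac},\mathit{{-}frac}\}\}\cup\{\mathit{time}(x)\leftrightarrow\mathit{nat}(x),\ \mathit{uni}(x)\to\mathit{rat}(x)\}$ ($f$ ranges over function symbols of $\mathcal L^*$, $m$ its arity, $x_i$ distinct variables). $S_U=\{\mathit{uni}(\tilde u)\eqcirc\bar1:\tilde u\in\tilde{\mathbb U}\}\cup\{\mathit{uni}(t)\eqcirc\bar0: t \text{ ground term of }\mathcal L^*,\ t\notin\tilde{\mathbb U}\}$. $S_{\mathbb A}=\{\tilde G_A(\tilde u)\eqcirc\overline{A(\langle\tilde u\rangle)}: A\in\mathbb A,\tilde u\in\tilde{\mathbb U}\}$. For a fuzzy variable assignment $e$: $S_e=\{\tilde H_X(\tau,\tilde u)\eqcirc\overline{e(X)(\langle\tilde u\rangle)}: X\in\mathbb X,\tilde u\in\tilde{\mathbb U}\}$ with $\tau$ a variable; $S_e(\tau/t)$ is its instance with $\tau$ replaced by the ground term $t$. For the rule $r$ above: $\varphi_r(\tau,y)=\mathit{time}(\tau)\wedge\mathit{uni}(y)\to\big(\tilde H^r_X(\tilde s(\tau),y)\eqcirc((\bigwedge_{i=0}^n\exists x\,(\mathit{uni}(x)\wedge\tilde H_{X_i}(\tau,x)\wedge\tilde G_{A_i}(x)))\wedge\tilde G_A(y))\big)$. $T_B=\{\varphi_r(\tau,y): r\in B\}\cup\{\mathit{time}(\tau)\wedge\mathit{uni}(y)\to(\tilde H_X(\tilde s(\tau),y)\eqcirc\bigvee_{r\in B,\mathrm{out}(r)=X}\tilde H^r_X(\tilde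 s(\tau),y)): X\in\mathbb X\}$ (an empty disjunction is $\bar0$). *)

theory Defs
  imports Complex_Main "HOL-Library.Countable" "HOL-Library.Countable_Set"
begin

text \<open>The universe U is the (countable, nonempty) type 'u; the variable set X is the
  (finite, nonempty) type 'x.  A fuzzy set is a map 'u => real with values in [0,1].\<close>

definition fuzzy_set :: "('u \<Rightarrow> real) \<Rightarrow> bool" where
  "fuzzy_set A \<longleftrightarrow> (\<forall>u. 0 \<le> A u \<and> A u \<le> 1)"

definition height :: "('u \<Rightarrow> real) \<Rightarrow> real" where
  "height A = (SUP u. A u)"

definition cut :: "real \<Rightarrow> ('u \<Rightarrow> real) \<Rightarrow> ('u \<Rightarrow> real)" where
  "cut c A = (\<lambda>u. min c (A u))"

definition finter :: "('u \<Rightarrow> real) \<Rightarrow> ('u \<Rightarrow> real) \<Rightarrow> ('u \<Rightarrow> real)" where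
  "finter A1 A2 = (\<lambda>u. min (A1 u) (A2 u))"

definition funion :: "('u \<Rightarrow> real) set \<Rightarrow> ('u \<Rightarrow> real)" where
  "funion F = (\<lambda>u. if F = {} then 0 else Max ((\<lambda>A. A u) ` F))"

text \<open>A rule "IF X0 is A0 and ... and Xn is An THEN X is A": the antecedent list
  [(X0,A0),...,(Xn,An)] (nonempty), the output variable X and the output set A.\<close>
datatype ('x, 'u) rule = Rule "('x \<times> ('u \<Rightarrow> real)) list" 'x "'u \<Rightarrow> real"

fun ants :: "('x, 'u) rule \<Rightarrow> ('x \<times> ('u \<Rightarrow> real)) list" where
  "ants (Rule as X A) = as"
fun out :: "('x, 'u) rule \<Rightarrow> 'x" where
  "out (Rule as X A) = X"
fun conseq :: "('x, 'u) rule \<Rightarrow> ('u \<Rightarrow> real)" where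
  "conseq (Rule as X A) = A"

definition rule_ok :: "('u \<Rightarrow> real) set \<Rightarrow> ('x, 'u) rule \<Rightarrow> bool" where
  "rule_ok AA r \<longleftrightarrow> ants r \<noteq> [] \<and> (\<forall>(Xi, Ai) \<in> set (ants r). Ai \<in> AA) \<and> conseq r \<in> AA"

definition rule_base :: "('u \<Rightarrow> real) set \<Rightarrow> ('x, 'u) rule set \<Rightarrow> bool" where
  "rule_base AA B \<longleftrightarrow> finite B \<and> B \<noteq> {} \<and> (\<forall>r\<in>B. rule_ok AA r)"

definition fuzzy_assignment :: "('x \<Rightarrow> 'u \<Rightarrow> real) \<Rightarrow> bool" where
  "fuzzy_assignment e \<longleftrightarrow> (\<forall>X. fuzzy_set (e X))"

definition rule_val :: "('x, 'u) rule \<Rightarrow> ('x \<Rightarrow> 'u \<Rightarrow> real) \<Rightarrow> ('u \<Rightarrow> real)" where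
  "rule_val r e = cut (Min (set (map (\<lambda>(Xi, Ai). height (finter (e Xi) Ai)) (ants r)))) (conseq r)"

definition base_val :: "('x, 'u) rule set \<Rightarrow> ('x \<Rightarrow> 'u \<Rightarrow> real) \<Rightarrow> 'x \<Rightarrow> ('u \<Rightarrow> real)" where
  "base_val B e X = funion {rule_val r e | r. r \<in> B \<and> out r = X}"

text \<open>A fuzzy derivation e_0,...,e_eta (given as the first eta+1 values of es).\<close>
definition fuzzy_derivation :: "('x, 'u) rule set \<Rightarrow> (nat \<Rightarrow> 'x \<Rightarrow> 'u \<Rightarrow> real) \<Rightarrow> nat \<Rightarrow> bool" where
  "fuzzy_derivation B es \<eta> \<longleftrightarrow>
     (\<forall>\<kappa>\<le>\<eta>. fuzzy_assignment (es \<kappa>)) \<and>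
     (\<forall>\<kappa>. 1 \<le> \<kappa> \<and> \<kappa> \<le> \<eta> \<longrightarrow> (\<forall>X. es \<kappa> X = base_val B (es (\<kappa> - 1)) X))"

datatype 'f tm = V nat | Fn 'f "'f tm list"

record ('f, 'p, 'x, 'u) lang =
  farity :: "'f \<Rightarrow> nat"
  parity :: "'p \<Rightarrow> nat"
  zS :: 'f
  sS :: 'f
  fracS :: 'f
  nfracS :: 'f
  natP :: 'p
  ratP :: 'p
  timeP :: 'p
  uniP :: 'p
  GP :: "('u \<Rightarrow> real) \<Rightarrow> 'p"
  HP :: "'x \<Rightarrow> 'p"
  HrP :: "('x, 'u) rule \<Rightarrow> 'p"

definition lang_ok :: "('f, 'p, 'x, 'u) lang \<Rightarrow> ('u \<Rightarrow> real) set \<Rightarrow> ('x, 'u) rule set \<Rightarrow> bool" where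
  "lang_ok L AA B \<longleftrightarrow>
     distinct [zS L, sS L, fracS L, nfracS L] \<and>
     farity L (zS L) = 0 \<and> farity L (sS L) = 1 \<and> farity L (fracS L) = 2 \<and> farity L (nfracS L) = 2 \<and>
     distinct [natP L, ratP L, timeP L, uniP L] \<and>
     inj_on (GP L) AA \<and> inj (HP L) \<and> inj_on (HrP L) B \<and>
     {natP L, ratP L, timeP L, uniP L} \<inter> GP L ` AA = {} \<and>
     {natP L, ratP L, timeP L, uniP L} \<inter> range (HP L) = {} \<and>
     {natP L, ratP L, timeP L, uniP L} \<inter> HrP L ` B = {} \<and>
     GP L ` AA \<inter> range (HP L) = {} \<and> GP L ` AA \<inter> HrP L ` B = {} \<and> range (HP L) \<inter> HrP L ` B = {} \<and>
     parity L (natP L) = 1 \<and> parity L (ratP L) = 1 \<and> parity L (timeP L) = 1 \<and> parity L (uniP L) = 1 \<and>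
     (\<forall>A\<in>AA. parity L (GP L A) = 1) \<and> (\<forall>X. parity L (HP L X) = 2) \<and> (\<forall>r\<in>B. parity L (HrP L r) = 2)"

fun ground :: "('f, 'p, 'x, 'u) lang \<Rightarrow> 'f tm \<Rightarrow> bool" where
  "ground L (V n) = False"
| "ground L (Fn f ts) = (length ts = farity L f \<and> (\<forall>t\<in>set ts. ground L t))"

datatype ('f, 'p) form =
    TC real
  | Atm 'p "'f tm list"
  | Conj "('f, 'p) form" "('f, 'p) form"
  | Disj "('f, 'p) form" "('f, 'p) form"
  | Impl "('f, 'p) form" "('f, 'p) form"
  | Biimp "('f, 'p) form" "('f, 'p) form"
  | EqC "('f, 'p) form" "('f, 'p) form"
  | Forall nat "('f, 'p) form"
  | Exists nat "('f, 'p) form"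

text \<open>Terms are interpreted by term formation (interpretations in class K).\<close>
fun teval :: "(nat \<Rightarrow> 'f tm) \<Rightarrow> 'f tm \<Rightarrow> 'f tm" where
  "teval \<rho> (V n) = \<rho> n"
| "teval \<rho> (Fn f ts) = Fn f (map (teval \<rho>) ts)"

definition gimp :: "real \<Rightarrow> real \<Rightarrow> real" where
  "gimp a b = (if a \<le> b then 1 else b)"

fun fval :: "('f, 'p, 'x, 'u) lang \<Rightarrow> ('p \<Rightarrow> 'f tm list \<Rightarrow> real) \<Rightarrow> (nat \<Rightarrow> 'f tm) \<Rightarrow> ('f, 'p) form \<Rightarrow> real" where
  "fval L I \<rho> (TC c) = c"
| "fval L I \<rho> (Atm p ts) = I p (map (teval \<rho>) ts)"
| "fval L I \<rho> (Conj a b) = min (fval L I \<rho> a) (fval L I \<rho> b)"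
| "fval L I \<rho> (Disj a b) = max (fval L I \<rho> a) (fval L I \<rho> b)"
| "fval L I \<rho> (Impl a b) = gimp (fval L I \<rho> a) (fval L I \<rho> b)"
| "fval L I \<rho> (Biimp a b) = min (gimp (fval L I \<rho> a) (fval L I \<rho> b)) (gimp (fval L I \<rho> b) (fval L I \<rho> a))"
| "fval L I \<rho> (EqC a b) = (if fval L I \<rho> a = fval L I \<rho> b then 1 else 0)"
| "fval L I \<rho> (Forall x a) = (INF t\<in>{t. ground L t}. fval L I (\<rho>(x := t)) a)"
| "fval L I \<rho> (Exists x a) = (SUP t\<in>{t. ground L t}. fval L I (\<rho>(x := t)) a)"

text \<open>An interpretation of class K is determined by its [0,1]-valued predicates.\<close>
definition K_interp :: "('p \<Rightarrow> 'f tm list \<Rightarrow> real) \<Rightarrow> bool" where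
  "K_interp I \<longleftrightarrow> (\<forall>p ts. 0 \<le> I p ts \<and> I p ts \<le> 1)"

definition holds :: "('f, 'p, 'x, 'u) lang \<Rightarrow> ('p \<Rightarrow> 'f tm list \<Rightarrow> real) \<Rightarrow> ('f, 'p) form \<Rightarrow> bool" where
  "holds L I \<phi> \<longleftrightarrow> (\<forall>\<rho>. (\<forall>n. ground L (\<rho> n)) \<longrightarrow> fval L I \<rho> \<phi> = 1)"

definition entails_K :: "('f, 'p, 'x, 'u) lang \<Rightarrow> ('f, 'p) form set \<Rightarrow> ('f, 'p) form set \<Rightarrow> bool" where
  "entails_K L \<Gamma> \<Phi> \<longleftrightarrow>
     (\<forall>I. K_interp I \<longrightarrow> (\<forall>\<phi>\<in>\<Gamma>. holds L I \<phi>) \<longrightarrow> (\<forall>\<phi>\<in>\<Phi>. holds L I \<phi>))"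

fun bigConj :: "('f, 'p) form list \<Rightarrow> ('f, 'p) form" where
  "bigConj [] = TC 1"
| "bigConj [a] = a"
| "bigConj (a # as) = Conj a (bigConj as)"

fun bigDisj :: "('f, 'p) form list \<Rightarrow> ('f, 'p) form" where
  "bigDisj [] = TC 0"
| "bigDisj [a] = a"
| "bigDisj (a # as) = Disj a (bigDisj as)"

definition zt :: "('f, 'p, 'x, 'u) lang \<Rightarrow> 'f tm" where
  "zt L = Fn (zS L) []"

definition num :: "('f, 'p, 'x, 'u) lang \<Rightarrow> nat \<Rightarrow> 'f tm" where
  "num L n = ((\<lambda>t. Fn (sS L) [t]) ^^ n) (zt L)"

definition rat_numeral :: "('f, 'p, 'x, 'u) lang \<Rightarrow> 'f tm \<Rightarrow> bool" where
  "rat_numeral L t \<longleftrightarrow>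
     (\<exists>m n. 0 < n \<and> t = Fn (fracS L) [num L m, num L n]) \<or>
     (\<exists>m n. 0 < m \<and> 0 < n \<and> t = Fn (nfracS L) [num L m, num L n])"

definition ratval :: "('f, 'p, 'x, 'u) lang \<Rightarrow> 'f tm \<Rightarrow> rat" where
  "ratval L t = (THE q. \<exists>m n.
      (0 < n \<and> t = Fn (fracS L) [num L m, num L n] \<and> q = of_nat m / of_nat n) \<or>
      (0 < m \<and> 0 < n \<and> t = Fn (nfracS L) [num L m, num L n] \<and> q = - (of_nat m / of_nat n)))"

definition unb :: "('f, 'p, 'x, 'u) lang \<Rightarrow> ('u \<Rightarrow> rat) \<Rightarrow> 'f tm \<Rightarrow> 'u" where
  "unb L \<gamma> t = inv \<gamma> (ratval L t)"

text \<open>Variable names: x = 0, y = 1 in T_D; tau = 0, y = 1, x = 2 in T_B.\<close>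

definition T_D :: "('f, 'p, 'x, 'u) lang \<Rightarrow> ('f, 'p) form set" where
  "T_D L =
     {Atm (natP L) [zt L],
      Biimp (Atm (natP L) [Fn (sS L) [V 0]]) (Atm (natP L) [V 0]),
      Biimp (Atm (ratP L) [Fn (fracS L) [V 0, Fn (sS L) [V 1]]])
            (Conj (Atm (natP L) [V 0]) (Atm (natP L) [V 1])),
      Biimp (Atm (ratP L) [Fn (nfracS L) [Fn (sS L) [V 0], Fn (sS L) [V 1]]])
            (Conj (Atm (natP L) [V 0]) (Atm (natP L) [V 1]))}
   \<union> {EqC (Atm (natP L) [Fn f (map V [0..<farity L f])]) (TC 0) | f. f \<notin> {zS L, sS L}}
   \<union> {EqC (Atm (ratP L) [Fn f (map V [0..<farity L f])]) (TC 0) | f. f \<notin> {fracS L, nfracS L}}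
   \<union> {Biimp (Atm (timeP L) [V 0]) (Atm (natP L) [V 0]),
      Impl (Atm (uniP L) [V 0]) (Atm (ratP L) [V 0])}"

definition S_U :: "('f, 'p, 'x, 'u) lang \<Rightarrow> 'f tm set \<Rightarrow> ('f, 'p) form set" where
  "S_U L Ut =
     {EqC (Atm (uniP L) [u]) (TC 1) | u. u \<in> Ut}
   \<union> {EqC (Atm (uniP L) [t]) (TC 0) | t. ground L t \<and> t \<notin> Ut}"

definition S_A :: "('f, 'p, 'x, 'u) lang \<Rightarrow> ('u \<Rightarrow> real) set \<Rightarrow> 'f tm set \<Rightarrow> ('u \<Rightarrow> rat) \<Rightarrow> ('f, 'p) form set" where
  "S_A L AA Ut \<gamma> = {EqC (Atm (GP L A) [u]) (TC (A (unb L \<gamma> u))) | A u. A \<in> AA \<and> u \<in> Ut}"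

text \<open>S_e(tau/t): S_e with the variable tau replaced by the term t.\<close>
definition S_e :: "('f, 'p, 'x, 'u) lang \<Rightarrow> 'f tm set \<Rightarrow> ('u \<Rightarrow> rat) \<Rightarrow> ('x \<Rightarrow> 'u \<Rightarrow> real) \<Rightarrow> 'f tm \<Rightarrow> ('f, 'p) form set" where
  "S_e L Ut \<gamma> e t = {EqC (Atm (HP L X) [t, u]) (TC (e X (unb L \<gamma> u))) | X u. u \<in> Ut}"

definition phi_r :: "('f, 'p, 'x, 'u) lang \<Rightarrow> ('x, 'u) rule \<Rightarrow> ('f, 'p) form" where
  "phi_r L r =
     Impl (Conj (Atm (timeP L) [V 0]) (Atm (uniP L) [V 1]))
       (EqC (Atm (HrP L r) [Fn (sS L) [V 0], V 1])
            (Conj (bigConj (map (\<lambda>(Xi, Ai). Exists 2 (Conj (Atm (uniP L) [V 2])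
                                   (Conj (Atm (HP L Xi) [V 0, V 2]) (Atm (GP L Ai) [V 2])))) (ants r)))
                  (Atm (GP L (conseq r)) [V 1])))"

definition rules_list :: "('x, 'u) rule set \<Rightarrow> 'x \<Rightarrow> ('x, 'u) rule list" where
  "rules_list B X = (SOME rs. distinct rs \<and> set rs = {r \<in> B. out r = X})"

definition T_B :: "('f, 'p, 'x, 'u) lang \<Rightarrow> ('x, 'u) rule set \<Rightarrow> ('f, 'p) form set" where
  "T_B L B = {phi_r L r | r. r \<in> B}
   \<union> {Impl (Conj (Atm (timeP L) [V 0]) (Atm (uniP L) [V 1]))
        (EqC (Atm (HP L X) [Fn (sS L) [V 0], V 1])
             (bigDisj (map (\<lambda>r. Atm (HrP L r) [Fn (sS L) [V 0], V 1]) (rules_list B X)))) | X. True}"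

end

theory Submission
  imports Defs
begin

text \<open>The axioms of T_D force nat, and hence time, to be 1 on every
  natural numeral; S_U makes uni the characteristic function of the universe numerals, and S_A
  pins down the predicates G_A there. Under these facts the existential quantifier in the axiom of
  a rule r ranges, in effect, only over universe numerals, so it evaluates to the height of
  e(X_i) \<inter> A_i whenever H at time k represents e; hence H^r at time k + 1 represents the value of
  r, and by the second group of axioms of T_B, H at time k + 1 represents the value of B. Induction
  along the derivation, starting from S_e0 at time 0, gives S_e\<eta> at time \<eta>.\<close>

lemma teval_ground: "ground L t \<Longrightarrow> teval \<rho> t = t"
  by (induction t) (auto intro!: map_idI)

lemma map_teval_ground: "\<forall>t\<in>set ts. ground L t \<Longrightarrow> map (teval \<rho>) ts = ts"
  by (auto intro: map_idI teval_ground)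

lemma fval_EqC_eq_1: "fval L I \<rho> (EqC a b) = 1 \<Longrightarrow> fval L I \<rho> a = fval L I \<rho> b"
  by (simp split: if_splits)

lemma fval_Biimp_eq_1:
  "\<lbrakk>fval L I \<rho> (Biimp a b) = 1; fval L I \<rho> a \<le> 1; fval L I \<rho> b \<le> 1\<rbrakk>
    \<Longrightarrow> fval L I \<rho> a = fval L I \<rho> b"
  by (auto simp: gimp_def split: if_splits)

lemma fval_Impl_EqC_eq_1:
  "\<lbrakk>fval L I \<rho> (Impl a (EqC b c)) = 1; fval L I \<rho> a = 1\<rbrakk> \<Longrightarrow> fval L I \<rho> b = fval L I \<rho> c"
  by (auto simp: gimp_def split: if_splits)

lemma fval_bigConj_map:
  "xs \<noteq> [] \<Longrightarrow> fval L I \<rho> (bigConj (map F xs)) = Min ((\<lambda>a. fval L I \<rho> (F a)) ` set xs)"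
proof (induction xs rule: induct_list012)
  case (3 a b ys)
  then show ?case by (simp add: min.assoc)
qed simp_all

lemma fval_bigDisj_map:
  "fval L I \<rho> (bigDisj (map F xs)) = (if xs = [] then 0 else Max ((\<lambda>a. fval L I \<rho> (F a)) ` set xs))"
proof (induction xs rule: induct_list012)
  case (3 a b ys)
  then show ?case by (simp add: max.assoc)
qed simp_all

lemma cSUP_eq_cSUP_reindex_support:
  fixes f :: "'a \<Rightarrow> real" and g :: "'b \<Rightarrow> real"
  assumes "U \<subseteq> G" and "h ` U = UNIV"
    and on_U: "\<And>t. t \<in> U \<Longrightarrow> f t = g (h t)"
    and off_U: "\<And>t. t \<in> G \<Longrightarrow> t \<notin> U \<Longrightarrow> f t = 0"
    and bounds: "\<And>t. t \<in> G \<Longrightarrow> 0 \<le> f t \<and> f t \<le> 1"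
  shows "(SUP t\<in>G. f t) = (SUP w. g w)"
proof -
  have g_bounds: "0 \<le> g w \<and> g w \<le> 1" for w
    using assms by (metis UNIV_I image_iff subsetD)
  have bdd_f: "bdd_above (f ` G)" and bdd_g: "bdd_above (range g)"
    using bounds g_bounds by (auto intro: bdd_aboveI[of _ 1])
  have "G \<noteq> {}" using assms by auto
  show ?thesis
  proof (rule antisym)
    have "f t \<le> (SUP w. g w)" if "t \<in> G" for t
    proof (cases "t \<in> U")
      case True then show ?thesis using on_U cSUP_upper[OF UNIV_I bdd_g] by simp
    next
      case False then show ?thesis
        using off_U that g_bounds cSUP_upper[OF UNIV_I bdd_g] by (metis order_trans)
    qed
    then show "(SUP t\<in>G. f t) \<le> (SUP w. g w)" by (rule cSUP_least[OF \<open>G \<noteq> {}\<close>])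
  next
    have "g w \<le> (SUP t\<in>G. f t)" for w
    proof -
      obtain t where "t \<in> U" "h t = w" using \<open>h ` U = UNIV\<close> by (metis UNIV_I imageE)
      then show ?thesis using on_U cSUP_upper[OF _ bdd_f] \<open>U \<subseteq> G\<close> by force
    qed
    then show "(SUP w. g w) \<le> (SUP t\<in>G. f t)" by (rule cSUP_least[OF UNIV_not_empty])
  qed
qed

lemma num_0: "num L 0 = zt L"
  by (simp add: num_def)

lemma num_Suc: "num L (Suc n) = Fn (sS L) [num L n]"
  by (simp add: num_def)

lemma ground_zt: "lang_ok L AA B \<Longrightarrow> ground L (zt L)"
  by (simp add: zt_def lang_ok_def)

lemma ground_num: "lang_ok L AA B \<Longrightarrow> ground L (num L n)"
  by (induction n) (auto simp: num_0 num_Suc ground_zt lang_ok_def)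

lemma ground_rat_numeral: "lang_ok L AA B \<Longrightarrow> rat_numeral L t \<Longrightarrow> ground L t"
  unfolding rat_numeral_def using ground_num[of L AA B] by (auto simp: lang_ok_def)

lemma set_rules_list:
  assumes "finite B"
  shows "set (rules_list B X) = {r \<in> B. out r = X}"
proof -
  have "\<exists>rs. distinct rs \<and> set rs = {r \<in> B. out r = X}"
    using finite_distinct_list[of "{r \<in> B. out r = X}"] assms by auto
  then show ?thesis unfolding rules_list_def by (rule someI2_ex) simp
qed

lemma base_val_eq_Max:
  "finite B \<Longrightarrow> base_val B e X u =
    (if {r \<in> B. out r = X} = {} then 0 else Max ((\<lambda>r. rule_val r e u) ` {r \<in> B. out r = X}))"
  unfolding base_val_def funion_def by (auto simp: image_image intro!: arg_cong[where f = Max])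

locale encoding_model =
  fixes L :: "('f, 'p, 'x, 'u) lang"
    and AA :: "('u \<Rightarrow> real) set"
    and B :: "('x, 'u) rule set"
    and Ut :: "'f tm set"
    and \<gamma> :: "'u \<Rightarrow> rat"
    and I :: "'p \<Rightarrow> 'f tm list \<Rightarrow> real"
  assumes lang: "lang_ok L AA B"
    and base: "rule_base AA B"
    and numerals: "\<forall>t\<in>Ut. rat_numeral L t"
    and \<gamma>: "inj \<gamma>" "ratval L ` Ut = range \<gamma>"
    and K: "K_interp I"
    and T_D: "\<forall>\<phi>\<in>T_D L. holds L I \<phi>"
    and S_U: "\<forall>\<phi>\<in>S_U L Ut. holds L I \<phi>"
    and S_A: "\<forall>\<phi>\<in>S_A L AA Ut \<gamma>. holds L I \<phi>"
    and T_B: "\<forall>\<phi>\<in>T_B L B. holds L I \<phi>"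
begin

definition asg :: "'f tm \<Rightarrow> 'f tm \<Rightarrow> nat \<Rightarrow> 'f tm" where
  "asg a b = (\<lambda>_. zt L)(0 := a, 1 := b)"

definition represents_at :: "'f tm \<Rightarrow> ('x \<Rightarrow> 'u \<Rightarrow> real) \<Rightarrow> bool" where
  "represents_at t e \<longleftrightarrow> (\<forall>X. \<forall>u\<in>Ut. I (HP L X) [t, u] = e X (unb L \<gamma> u))"

lemma I_bounds: "0 \<le> I p ts" "I p ts \<le> 1"
  using K by (auto simp: K_interp_def)

lemma ground_num: "ground L (num L n)"
  using ground_num[OF lang] .

lemma ground_Ut: "t \<in> Ut \<Longrightarrow> ground L t"
  using ground_rat_numeral[OF lang] numerals by blast

lemma teval_Ut: "t \<in> Ut \<Longrightarrow> teval \<rho> t = t"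
  using ground_Ut teval_ground by blast

lemma ground_asg: "ground L a \<Longrightarrow> ground L b \<Longrightarrow> ground L (asg a b n)"
  by (simp add: asg_def ground_zt[OF lang])

lemma fval_asg_eq_1: "holds L I \<phi> \<Longrightarrow> ground L a \<Longrightarrow> ground L b \<Longrightarrow> fval L I (asg a b) \<phi> = 1"
  by (simp add: holds_def ground_asg)

lemma holds_EqC_Atm_TC:
  assumes "holds L I (EqC (Atm p ts) (TC c))" and "\<forall>t\<in>set ts. ground L t"
  shows "I p ts = c"
  using fval_EqC_eq_1[OF fval_asg_eq_1[OF assms(1) ground_zt[OF lang] ground_zt[OF lang]]]
  by (simp add: map_teval_ground[OF assms(2)])

lemma natP_num: "I (natP L) [num L n] = 1"
proof (induction n)
  case 0
  have "fval L I (asg (zt L) (zt L)) (Atm (natP L) [zt L]) = 1"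
    using T_D by (intro fval_asg_eq_1) (simp_all add: T_D_def ground_zt[OF lang])
  then show ?case by (simp add: num_0 zt_def)
next
  case (Suc n)
  let ?\<rho> = "asg (num L n) (num L n)"
  have "holds L I (Biimp (Atm (natP L) [Fn (sS L) [V 0]]) (Atm (natP L) [V 0]))"
    using T_D by (simp add: T_D_def)
  then have "fval L I ?\<rho> (Atm (natP L) [Fn (sS L) [V 0]]) = fval L I ?\<rho> (Atm (natP L) [V 0])"
    by (intro fval_Biimp_eq_1 fval_asg_eq_1 ground_num) (simp_all add: I_bounds)
  then show ?case using Suc by (simp add: asg_def num_Suc)
qed

lemma timeP_num: "I (timeP L) [num L n] = 1"
proof -
  let ?\<rho> = "asg (num L n) (num L n)"
  have "holds L I (Biimp (Atm (timeP L) [V 0]) (Atm (natP L) [V 0]))"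
    using T_D by (simp add: T_D_def)
  then have "fval L I ?\<rho> (Atm (timeP L) [V 0]) = fval L I ?\<rho> (Atm (natP L) [V 0])"
    by (intro fval_Biimp_eq_1 fval_asg_eq_1 ground_num) (simp_all add: I_bounds)
  then show ?thesis using natP_num by (simp add: asg_def)
qed

lemma uniP_Ut: "t \<in> Ut \<Longrightarrow> I (uniP L) [t] = 1"
  using S_U by (intro holds_EqC_Atm_TC) (auto simp: S_U_def ground_Ut)

lemma uniP_not_Ut: "ground L t \<Longrightarrow> t \<notin> Ut \<Longrightarrow> I (uniP L) [t] = 0"
  using S_U by (intro holds_EqC_Atm_TC) (auto simp: S_U_def)

lemma GP_Ut: "A \<in> AA \<Longrightarrow> t \<in> Ut \<Longrightarrow> I (GP L A) [t] = A (unb L \<gamma> t)"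
  using S_A by (intro holds_EqC_Atm_TC) (auto simp: S_A_def ground_Ut)

lemma unb_image_Ut: "unb L \<gamma> ` Ut = UNIV"
proof -
  have "w \<in> unb L \<gamma> ` Ut" for w
  proof -
    obtain t where "t \<in> Ut" "ratval L t = \<gamma> w" using \<gamma>(2) by (metis rangeI imageE)
    then show ?thesis using \<gamma>(1) by (metis image_eqI inv_f_f unb_def)
  qed
  then show ?thesis by blast
qed

lemma represents_at_iff_S_e:
  assumes "ground L t"
  shows "represents_at t e \<longleftrightarrow> (\<forall>\<phi>\<in>S_e L Ut \<gamma> e t. holds L I \<phi>)"
proof
  assume "represents_at t e"
  then show "\<forall>\<phi>\<in>S_e L Ut \<gamma> e t. holds L I \<phi>"
    using assms by (auto simp: represents_at_def S_e_def holds_def teval_ground teval_Ut)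
next
  assume S_e: "\<forall>\<phi>\<in>S_e L Ut \<gamma> e t. holds L I \<phi>"
  show "represents_at t e"
    unfolding represents_at_def
  proof (intro allI ballI)
    fix X u assume "u \<in> Ut"
    then have "holds L I (EqC (Atm (HP L X) [t, u]) (TC (e X (unb L \<gamma> u))))"
      using S_e by (auto simp: S_e_def)
    then show "I (HP L X) [t, u] = e X (unb L \<gamma> u)"
      by (rule holds_EqC_Atm_TC) (simp add: assms ground_Ut \<open>u \<in> Ut\<close>)
  qed
qed

lemma fval_antecedent:
  assumes e: "represents_at (num L k) e" and "Ai \<in> AA" and "ground L b"
  shows "fval L I (asg (num L k) b)
           (Exists 2 (Conj (Atm (uniP L) [V 2]) (Conj (Atm (HP L Xi) [V 0, V 2]) (Atm (GP L Ai) [V 2]))))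
         = height (finter (e Xi) Ai)"
proof -
  let ?f = "\<lambda>t. min (I (uniP L) [t]) (min (I (HP L Xi) [num L k, t]) (I (GP L Ai) [t]))"
  have "(SUP t\<in>{t. ground L t}. ?f t) = (SUP w. finter (e Xi) Ai w)"
  proof (rule cSUP_eq_cSUP_reindex_support[OF _ unb_image_Ut])
    show "Ut \<subseteq> {t. ground L t}" using ground_Ut by auto
    show "?f t = finter (e Xi) Ai (unb L \<gamma> t)" if "t \<in> Ut" for t
    proof -
      have HP: "I (HP L Xi) [num L k, t] = e Xi (unb L \<gamma> t)"
        using e that by (simp add: represents_at_def)
      then have "e Xi (unb L \<gamma> t) \<le> 1" using I_bounds(2) by metis
      then show ?thesis using HP uniP_Ut[OF that] GP_Ut[OF \<open>Ai \<in> AA\<close> that] by (simp add: finter_def)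
    qed
    show "?f t = 0" if "t \<in> {t. ground L t}" "t \<notin> Ut" for t
      using uniP_not_Ut[of t] that by (simp add: I_bounds min_def)
    show "0 \<le> ?f t \<and> ?f t \<le> 1" for t
      by (simp add: I_bounds min.coboundedI1)
  qed
  then show ?thesis by (simp add: asg_def height_def)
qed

lemma HrP_num_Suc:
  assumes e: "represents_at (num L k) e" and "r \<in> B" and "u \<in> Ut"
  shows "I (HrP L r) [num L (Suc k), u] = rule_val r e (unb L \<gamma> u)"
proof -
  let ?\<rho> = "asg (num L k) u"
  let ?ant = "\<lambda>(Xi, Ai). Exists 2 (Conj (Atm (uniP L) [V 2])
                             (Conj (Atm (HP L Xi) [V 0, V 2]) (Atm (GP L Ai) [V 2])))"
  have r: "ants r \<noteq> []" "\<forall>(Xi, Ai)\<in>set (ants r). Ai \<in> AA" "conseq r \<in> AA"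
    using base \<open>r \<in> B\<close> by (auto simp: rule_base_def rule_ok_def)
  have "holds L I (phi_r L r)" using T_B \<open>r \<in> B\<close> by (auto simp: T_B_def)
  then have "fval L I ?\<rho> (phi_r L r) = 1"
    using fval_asg_eq_1 ground_num ground_Ut \<open>u \<in> Ut\<close> by blast
  then have "fval L I ?\<rho> (Atm (HrP L r) [Fn (sS L) [V 0], V 1])
      = fval L I ?\<rho> (Conj (bigConj (map ?ant (ants r))) (Atm (GP L (conseq r)) [V 1]))"
    unfolding phi_r_def
    by (rule fval_Impl_EqC_eq_1) (simp add: asg_def timeP_num uniP_Ut[OF \<open>u \<in> Ut\<close>])
  moreover have "fval L I ?\<rho> (bigConj (map ?ant (ants r)))
      = Min ((\<lambda>(Xi, Ai). height (finter (e Xi) Ai)) ` set (ants r))"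
    unfolding fval_bigConj_map[OF r(1)]
  proof (intro arg_cong[where f = Min] image_cong refl)
    fix a assume "a \<in> set (ants r)"
    then obtain Xi Ai where a: "a = (Xi, Ai)" and "Ai \<in> AA" using r(2) by auto
    show "fval L I ?\<rho> (?ant a) = (\<lambda>(Xi, Ai). height (finter (e Xi) Ai)) a"
      unfolding a using fval_antecedent[OF e \<open>Ai \<in> AA\<close> ground_Ut[OF \<open>u \<in> Ut\<close>]] by simp
  qed
  ultimately show ?thesis
    by (simp add: asg_def num_Suc GP_Ut[OF r(3) \<open>u \<in> Ut\<close>] rule_val_def cut_def)
qed

lemma represents_at_Suc:
  assumes e: "represents_at (num L k) e"
  shows "represents_at (num L (Suc k)) (base_val B e)"
  unfolding represents_at_def
proof (intro allI ballI)
  fix X u assume "u \<in> Ut"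
  let ?\<rho> = "asg (num L k) u"
  let ?rhs = "bigDisj (map (\<lambda>r. Atm (HrP L r) [Fn (sS L) [V 0], V 1]) (rules_list B X))"
  have "finite B" using base by (simp add: rule_base_def)
  then have no_rules: "rules_list B X = [] \<longleftrightarrow> {r \<in> B. out r = X} = {}"
    by (metis set_empty set_rules_list)
  have "holds L I (Impl (Conj (Atm (timeP L) [V 0]) (Atm (uniP L) [V 1]))
      (EqC (Atm (HP L X) [Fn (sS L) [V 0], V 1]) ?rhs))"
    using T_B by (auto simp: T_B_def)
  then have "fval L I ?\<rho> (Impl (Conj (Atm (timeP L) [V 0]) (Atm (uniP L) [V 1]))
      (EqC (Atm (HP L X) [Fn (sS L) [V 0], V 1]) ?rhs)) = 1"
    using fval_asg_eq_1 ground_num ground_Ut \<open>u \<in> Ut\<close> by blast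
  then have "fval L I ?\<rho> (Atm (HP L X) [Fn (sS L) [V 0], V 1]) = fval L I ?\<rho> ?rhs"
    by (rule fval_Impl_EqC_eq_1) (simp add: asg_def timeP_num uniP_Ut[OF \<open>u \<in> Ut\<close>])
  then have "I (HP L X) [num L (Suc k), u] = fval L I ?\<rho> ?rhs"
    by (simp add: asg_def num_Suc)
  also have "\<dots> = base_val B e X (unb L \<gamma> u)"
    using HrP_num_Suc[OF e _ \<open>u \<in> Ut\<close>]
    by (auto simp: fval_bigDisj_map no_rules set_rules_list[OF \<open>finite B\<close>] base_val_eq_Max[OF \<open>finite B\<close>]
             asg_def num_Suc intro!: arg_cong[where f = Max] image_cong)
  finally show "I (HP L X) [num L (Suc k), u] = base_val B e X (unb L \<gamma> u)" .
qed

lemma represents_derivation: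
  assumes "fuzzy_derivation B es \<eta>" and "represents_at (num L 0) (es 0)" and "\<kappa> \<le> \<eta>"
  shows "represents_at (num L \<kappa>) (es \<kappa>)"
  using \<open>\<kappa> \<le> \<eta>\<close>
proof (induction \<kappa>)
  case 0 then show ?case using assms(2) by simp
next
  case (Suc k)
  have "es (Suc k) = base_val B (es k)"
    using assms(1) Suc.prems by (auto simp: fuzzy_derivation_def)
  then show ?case using Suc represents_at_Suc by simp
qed

end

theorem lemma4:
  fixes L :: "('f::countable, 'p::countable, 'x::finite, 'u::countable) lang"
    and AA :: "('u \<Rightarrow> real) set"
    and B :: "('x, 'u) rule set"
    and es :: "nat \<Rightarrow> 'x \<Rightarrow> 'u \<Rightarrow> real"
    and \<eta> :: nat
    and C :: "real set"
    and \<gamma> :: "'u \<Rightarrow> rat"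
    and Ut :: "'f tm set"
  assumes AA: "finite AA" "AA \<noteq> {}" "\<forall>A\<in>AA. fuzzy_set A"
    and B: "rule_base AA B"
    and L: "lang_ok L AA B"
    and deriv: "fuzzy_derivation B es \<eta>"
    and C: "countable C" "C \<subseteq> {0..1}" "{0, 1} \<subseteq> C"
      "\<forall>A\<in>AA. range A \<subseteq> C" "\<forall>X. range (es 0 X) \<subseteq> C"
    and inC: "\<forall>\<kappa>\<le>\<eta>. \<forall>X u. es \<kappa> X u \<in> C"
    and \<gamma>: "inj \<gamma>"
    and Ut: "\<forall>t\<in>Ut. rat_numeral L t" "ratval L ` Ut = range \<gamma>"
  shows "entails_K L (T_D L \<union> S_U L Ut \<union> S_A L AA Ut \<gamma> \<union> T_B L B \<union> S_e L Ut \<gamma> (es 0) (zt L))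
                     (S_e L Ut \<gamma> (es \<eta>) (num L \<eta>))"
  unfolding entails_K_def
proof (intro allI impI)
  fix I
  assume "K_interp I"
    and model: "\<forall>\<phi>\<in>T_D L \<union> S_U L Ut \<union> S_A L AA Ut \<gamma> \<union> T_B L B \<union> S_e L Ut \<gamma> (es 0) (zt L). holds L I \<phi>"
  then interpret encoding_model L AA B Ut \<gamma> I
    using B L Ut \<gamma> by unfold_locales (simp_all add: ball_Un)
  have "\<forall>\<phi>\<in>S_e L Ut \<gamma> (es 0) (num L 0). holds L I \<phi>"
    using model by (simp add: num_0)
  then have "represents_at (num L 0) (es 0)"
    using represents_at_iff_S_e[OF ground_num] by blast
  then have "represents_at (num L \<eta>) (es \<eta>)"
    using represents_derivation[OF deriv] by blast
  then show "\<forall>\<phi>\<in>S_e L Ut \<gamma> (es \<eta>) (num L \<eta>). holds L I \<phi>"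
    using represents_at_iff_S_e[OF ground_num] by blast
qed

end
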